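(* Let $(\xi_j)_{j\ge 1}$ be independent, identically distributed random variables taking values in $\{-1,0,1\}$ with $\max_{x\in\{-1,0,1\}} \mathbb{P}(\xi_1 = x) < \frac{1}{\sqrt{3}}$. There exists a constant $C>0$ (depending only on the distribution of $\xi_1$) such that for every $N\ge 1$ and all pairwise distinct integers $a_1,\ldots,a_N$, \[\max_{m\in\mathbb{Z}} \mathbb{P}\left(\sum_{j=1}^N \xi_j a_j = m\right) \le \frac{C}{N^{3/2}}.\] *)

theory Defs
  imports "HOL-Probability.Probability"
begin

end

theory Submission
  imports Defs "HOL-Computational_Algebra.Primes"
begin

(* Halasz's method.  Choose a prime Q so large that sum_j x_j a_j = m can be tested modulo Q
   and the h a_j below are distinct modulo Q.  Fourier inversion over Z/QZ gives
     Q * P(S = m) <= sum_r prod_j |phi(r a_j / Q)|,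
   where phi is the characteristic function of xi, and non-degeneracy of xi gives
   |phi(z/Q)| <= exp(-kappa ||h z / Q||^2) with h = 1 or h = 2.  Hence
     Q * P(S = m) <= sum_r exp(-kappa D(r)^2 / Q^2),
   where D(r) is the l2-distance of the vector r (h a_j)_j to the lattice Q Z^N.  By Parseval at
   most 4Q/N residues have D(r) <= t0 = Q sqrt(N/40).  As D is subadditive, the k-fold sumset of
   {D <= t} lies in {D <= k t}, and the Cauchy-Davenport theorem turns this into
   |{D <= t}| <= (8Q/N) t/t0 + 1.  Summing the exponential over the layers of D gives
   Q * P(S = m) <= O(Q N^(-3/2)) + 2 + Q exp(-kappa N/40), and Q >= N^2 finishes the proof. *)

section \<open>Distance to the nearest multiple\<close>

definition dist_multiple :: "int \<Rightarrow> int \<Rightarrow> int" where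
  "dist_multiple Q z = min (z mod Q) (Q - z mod Q)"

lemma dist_multiple_nonneg: "Q > 0 \<Longrightarrow> 0 \<le> dist_multiple Q z"
proof -
  assume "Q > 0"
  then have "0 \<le> z mod Q" "z mod Q < Q" by auto
  then show ?thesis unfolding dist_multiple_def by (simp add: min_def)
qed

lemma dist_multiple_le_half: "Q > 0 \<Longrightarrow> 2 * dist_multiple Q z \<le> Q"
  unfolding dist_multiple_def min_def by auto

lemma dist_multiple_mod: "dist_multiple Q (z mod Q) = dist_multiple Q z"
  unfolding dist_multiple_def by simp

lemma dist_multiple_0: "Q \<ge> 0 \<Longrightarrow> dist_multiple Q 0 = 0"
  unfolding dist_multiple_def by simp

lemma dist_multiple_add_le:
  assumes "Q > 0" shows "dist_multiple Q (z + w) \<le> dist_multiple Q z + dist_multiple Q w"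
proof -
  have min_le: "min s (Q-s) \<le> min x (Q-x) + min y (Q-y)"
    if "0\<le>x" "x<Q" "0\<le>y" "y<Q" "s = x+y \<or> s = x+y-Q" for x y s
    using that by (cases "x \<le> Q - x"; cases "y \<le> Q-y"; cases "s \<le> Q - s"; auto simp: min_def)
  let ?x = "z mod Q" and ?y = "w mod Q"
  have x: "0 \<le> ?x" "?x < Q" and y: "0 \<le> ?y" "?y < Q" using assms by auto
  have "(z + w) mod Q = (?x + ?y) mod Q" by (simp add: mod_add_eq)
  moreover have "(?x + ?y) mod Q = ?x + ?y \<or> (?x + ?y) mod Q = ?x + ?y - Q"
  proof (cases "?x + ?y < Q")
    case True then show ?thesis using x y by (simp add: mod_pos_pos_trivial)
  next
    case False
    then have "(?x + ?y) mod Q = (?x + ?y - Q) mod Q" by (simp add: mod_diff_right_eq[symmetric])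
    also have "\<dots> = ?x + ?y - Q" using False x y by (intro mod_pos_pos_trivial) linarith+
    finally show ?thesis by simp
  qed
  ultimately show ?thesis unfolding dist_multiple_def using x y min_le by presburger
qed

lemma cos_dist_multiple:
  assumes "Q > 0"
  shows "cos (2 * pi * real_of_int z / real_of_int Q)
    = cos (2 * pi * real_of_int (dist_multiple Q z) / real_of_int Q)"
proof -
  define k where "k = z div Q"
  have z: "z = k * Q + z mod Q" by (simp add: k_def)
  have "cos (2 * pi * real_of_int z / real_of_int Q)
      = cos (2 * pi * real_of_int (z mod Q) / Q + 2 * pi * real_of_int k)"
    using assms by (subst z) (simp add: field_simps)
  also have "\<dots> = cos (2 * pi * real_of_int (z mod Q) / Q)"
    by (simp add: cos_add)
  finally have mod_eq: "cos (2 * pi * real_of_int z / real_of_int Q) = cos (2 * pi * real_of_int (z mod Q) / Q)" .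
  have "2 * pi * real_of_int (Q - z mod Q) / Q = - (2 * pi * real_of_int (z mod Q) / Q) + 2 * pi"
    using assms by (simp add: field_simps)
  then have reflect_eq: "cos (2 * pi * real_of_int (Q - z mod Q) / Q) = cos (2 * pi * real_of_int (z mod Q) / Q)"
    by simp
  show ?thesis
    using mod_eq reflect_eq unfolding dist_multiple_def
    by (cases "z mod Q \<le> Q - z mod Q") (auto simp: min_def)
qed

section \<open>The Cauchy--Davenport theorem\<close>

definition sumset_mod :: "int \<Rightarrow> int set \<Rightarrow> int set \<Rightarrow> int set" where
  "sumset_mod Q A B = (\<lambda>(a,b). (a+b) mod Q) ` (A \<times> B)"

lemma sumset_mod_iff: "x \<in> sumset_mod Q A B \<longleftrightarrow> (\<exists>a\<in>A. \<exists>b\<in>B. x = (a+b) mod Q)"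
  unfolding sumset_mod_def by auto

lemma sumset_mod_subset: "Q > 0 \<Longrightarrow> sumset_mod Q A B \<subseteq> {0..<Q}"
  unfolding sumset_mod_def by auto

lemma finite_sumset_mod: "finite A \<Longrightarrow> finite B \<Longrightarrow> finite (sumset_mod Q A B)"
  unfolding sumset_mod_def by auto

lemma inj_on_add_mod: fixes Q t :: int shows "inj_on (\<lambda>a. (a + t) mod Q) {0..<Q}"
proof (rule inj_onI)
  fix x y assume x: "x \<in> {0..<Q}" and y: "y \<in> {0..<Q}" and e: "(x + t) mod Q = (y + t) mod Q"
  have "((x + t) - t) mod Q = ((y + t) - t) mod Q"
    by (rule mod_diff_cong[OF e refl])
  then have "x mod Q = y mod Q" by simp
  then show "x = y" using x y by simp
qed

lemma card_image_add_mod: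
  fixes Q t :: int
  assumes "A \<subseteq> {0..<Q}" shows "card ((\<lambda>a. (a + t) mod Q) ` A) = card A"
  using assms by (intro card_image inj_on_subset[OF inj_on_add_mod])

lemma card_le_card_sumset_mod:
  fixes Q :: int
  assumes "Q > 0" "A \<subseteq> {0..<Q}" "b \<in> B" "finite B"
  shows "card A \<le> card (sumset_mod Q A B)"
proof -
  have "(\<lambda>a. (a + b) mod Q) ` A \<subseteq> sumset_mod Q A B" using assms(3) unfolding sumset_mod_def by force
  moreover have "finite A" using assms(2) finite_subset by blast
  then have "finite (sumset_mod Q A B)" using finite_sumset_mod assms(4) by blast
  ultimately have "card ((\<lambda>a. (a + b) mod Q) ` A) \<le> card (sumset_mod Q A B)" by (intro card_mono)
  then show ?thesis using card_image_add_mod[OF assms(2)] by simp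
qed

lemma add_mod_closed_eq_residues:
  fixes Q d a0 :: int
  assumes Q: "prime Q" and A: "A \<subseteq> {0..<Q}" "a0 \<in> A"
    and nd: "\<not> Q dvd d" and closed: "\<And>a. a \<in> A \<Longrightarrow> (a + d) mod Q \<in> A"
  shows "A = {0..<Q}"
proof -
  have Qpos: "Q > 0" using Q prime_gt_0_int by blast
  have orbit: "(a0 + int k * d) mod Q \<in> A" for k :: nat
  proof (induction k)
    case 0 then show ?case using A by auto
  next
    case (Suc k)
    have "a0 + int (Suc k) * d = (a0 + int k * d) + d" by (simp add: algebra_simps)
    then have "(a0 + int (Suc k) * d) mod Q = ((a0 + int k * d) mod Q + d) mod Q"
      by (metis mod_add_left_eq)
    then show ?case using closed[OF Suc] by simp
  qed
  have cop: "coprime d Q" using prime_imp_coprime[OF Q nd] by (simp add: coprime_commute)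
  obtain u v where uv: "u * d + v * Q = 1" using bezout_int[of d Q] cop by auto
  show ?thesis
  proof
    show "{0..<Q} \<subseteq> A"
    proof
      fix y assume y: "y \<in> {0..<Q}"
      define w where "w = (y - a0) * u"
      define k where "k = nat (w mod Q)"
      have k: "int k = w mod Q" using Qpos by (simp add: k_def)
      have e1: "(a0 + int k * d) mod Q = (a0 + w * d) mod Q"
        unfolding k by (metis mod_add_right_eq mod_mult_left_eq)
      have e2: "a0 + w * d = y + (- ((y - a0) * v)) * Q"
      proof -
        have "w * d = (y - a0) * (u * d)" by (simp add: w_def)
        also have "u * d = 1 - v * Q" using uv by simp
        finally show ?thesis by (simp add: algebra_simps)
      qed
      have "(a0 + w * d) mod Q = y mod Q" unfolding e2 by (rule mod_mult_self1)
      then have "(a0 + int k * d) mod Q = y"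
        using e1 y by simp
      then show "y \<in> A" using orbit[of k] by simp
    qed
  qed (use A in auto)
qed

lemma sumset_mod_e_transform:
  fixes Q e :: int
  assumes A: "A \<subseteq> {0..<Q}" and B: "B \<subseteq> {0..<Q}"
  defines "A' \<equiv> A \<union> (\<lambda>b. (b + e) mod Q) ` B" and "B' \<equiv> {b \<in> B. (b + e) mod Q \<in> A}"
  shows "sumset_mod Q A' B' \<subseteq> sumset_mod Q A B" and "card A' + card B' = card A + card B"
proof -
  show "sumset_mod Q A' B' \<subseteq> sumset_mod Q A B"
  proof
    fix x assume "x \<in> sumset_mod Q A' B'"
    then obtain x1 y where x1: "x1 \<in> A'" and y: "y \<in> B'" and x: "x = (x1 + y) mod Q"
      by (auto simp: sumset_mod_iff)
    show "x \<in> sumset_mod Q A B"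
    proof (cases "x1 \<in> A")
      case True then show ?thesis using x y by (auto simp: sumset_mod_iff B'_def)
    next
      case False
      then obtain b where b: "b \<in> B" "x1 = (b + e) mod Q" using x1 by (auto simp: A'_def)
      \<comment> \<open>\<open>(b + e) + y = (y + e) + b\<close>, and \<open>y \<in> B'\<close> puts \<open>(y + e) mod Q\<close> into \<open>A\<close>\<close>
      have "x = ((y + e) mod Q + b) mod Q"
        using x b by (simp add: mod_add_left_eq mod_add_right_eq algebra_simps)
      moreover have "(y + e) mod Q \<in> A" using y by (auto simp: B'_def)
      ultimately show ?thesis using b by (auto simp: sumset_mod_iff)
    qed
  qed
  have finA: "finite A" and finB: "finite B" using A B finite_subset by auto
  have "A' = A \<union> ((\<lambda>b. (b + e) mod Q) ` (B - B'))" by (auto simp: A'_def B'_def)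
  moreover have "A \<inter> ((\<lambda>b. (b + e) mod Q) ` (B - B')) = {}" by (auto simp: B'_def)
  moreover have "card ((\<lambda>b. (b + e) mod Q) ` (B - B')) = card (B - B')"
    using B by (intro card_image_add_mod) auto
  moreover have "card (B - B') = card B - card B'"
    using finB by (simp add: B'_def card_Diff_subset)
  moreover have "card B' \<le> card B" using finB by (simp add: B'_def card_mono)
  ultimately show "card A' + card B' = card A + card B"
    using finA finB by (simp add: card_Un_disjoint)
qed

theorem cauchy_davenport:
  fixes Q :: int
  assumes Q: "prime Q" and "A \<subseteq> {0..<Q}" "B \<subseteq> {0..<Q}" "A \<noteq> {}" "B \<noteq> {}"
  shows "min Q (int (card A) + int (card B) - 1) \<le> int (card (sumset_mod Q A B))"
  using assms(2-)
proof (induction "card B" arbitrary: A B rule: less_induct)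
  case less
  have Qpos: "Q > 0" using Q prime_gt_0_int by blast
  have finA: "finite A" and finB: "finite B" using less.prems finite_subset by auto
  obtain b1 where b1: "b1 \<in> B" using less.prems by auto
  have ge: "card A \<le> card (sumset_mod Q A B)"
    using card_le_card_sumset_mod[OF Qpos less.prems(1) b1 finB] .
  show ?case
  proof (cases "card B = 1 \<or> int (card A) = Q")
    case True then show ?thesis using ge by auto
  next
    case False
    then have "B \<noteq> {b1}" by auto
    then obtain b2 where b2: "b2 \<in> B" "b2 \<noteq> b1" using b1 by blast
    have "\<not> Q dvd (b2 - b1)"
    proof
      assume "Q dvd (b2 - b1)"
      then have "b2 mod Q = b1 mod Q" by (simp add: mod_eq_dvd_iff)
      moreover have "b1 mod Q = b1" "b2 mod Q = b2" using b1 b2 less.prems(2) by auto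
      ultimately show False using b2 by simp
    qed
    moreover have "A \<noteq> {0..<Q}" using False Qpos by auto
    ultimately obtain a where a: "a \<in> A" "(a + (b2 - b1)) mod Q \<notin> A"
      using add_mod_closed_eq_residues[OF Q less.prems(1)] less.prems(3) by blast
    define e where "e = a - b1"
    define A' where "A' = A \<union> (\<lambda>b. (b + e) mod Q) ` B"
    define B' where "B' = {b \<in> B. (b + e) mod Q \<in> A}"
    note transform = sumset_mod_e_transform[OF less.prems(1,2), of e, folded A'_def B'_def]
    have "b1 \<in> B'" using a b1 less.prems(1) by (auto simp: B'_def e_def)
    moreover have "b2 \<notin> B'" using a(2) by (simp add: B'_def e_def algebra_simps)
    ultimately have "card B' < card B" using b2 finB by (intro psubset_card_mono) (auto simp: B'_def)
    moreover have "A' \<subseteq> {0..<Q}" "B' \<subseteq> {0..<Q}" "A' \<noteq> {}" "B' \<noteq> {}"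
      using less.prems Qpos \<open>b1 \<in> B'\<close> by (auto simp: A'_def B'_def)
    ultimately have "min Q (int (card A') + int (card B') - 1) \<le> int (card (sumset_mod Q A' B'))"
      by (rule less.hyps)
    moreover have "card (sumset_mod Q A' B') \<le> card (sumset_mod Q A B)"
      using transform(1) finite_sumset_mod[OF finA finB] by (rule card_mono[rotated])
    ultimately show ?thesis using transform(2) by linarith
  qed
qed

fun iter_sumset_mod :: "int \<Rightarrow> nat \<Rightarrow> int set \<Rightarrow> int set" where
  "iter_sumset_mod Q 0 A = {0}"
| "iter_sumset_mod Q (Suc k) A = sumset_mod Q (iter_sumset_mod Q k A) A"

lemma iter_sumset_mod_subset: "Q > 0 \<Longrightarrow> iter_sumset_mod Q k A \<subseteq> {0..<Q}"
  by (cases k) (auto simp: sumset_mod_subset)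

lemma iter_sumset_mod_nonempty: "A \<noteq> {} \<Longrightarrow> iter_sumset_mod Q k A \<noteq> {}"
  by (induction k) (auto simp: sumset_mod_def)

lemma card_iter_sumset_mod:
  fixes Q :: int
  assumes Q: "prime Q" and A: "A \<subseteq> {0..<Q}" "A \<noteq> {}"
  shows "min Q (int k * int (card A) - int k + 1) \<le> int (card (iter_sumset_mod Q k A))"
proof (induction k)
  case 0
  have "Q > 0" using Q prime_gt_0_int by blast
  then show ?case by simp
next
  case (Suc k)
  have Qpos: "Q > 0" using Q prime_gt_0_int by blast
  let ?S = "iter_sumset_mod Q k A"
  have c1: "int (card A) \<ge> 1" using A finite_subset[OF A(1)] by (simp add: Suc_leI card_gt_0_iff)
  have "min Q (int (card ?S) + int (card A) - 1) \<le> int (card (iter_sumset_mod Q (Suc k) A))"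
    using cauchy_davenport[OF Q iter_sumset_mod_subset[OF Qpos] A(1) iter_sumset_mod_nonempty[OF A(2)] A(2)]
    by simp
  moreover have "Q \<le> int (card ?S) \<or> int k * int (card A) - int k + 1 \<le> int (card ?S)"
    using Suc.IH by (simp add: min_le_iff_disj)
  ultimately show ?case using c1 by (auto simp: min_def algebra_simps split: if_splits)
qed

section \<open>Distance of a dilate to the lattice \<open>Q \<int>\<^sup>I\<close>\<close>

definition lattice_dist :: "int \<Rightarrow> ('i \<Rightarrow> int) \<Rightarrow> 'i set \<Rightarrow> int \<Rightarrow> real" where
  "lattice_dist Q b I r = L2_set (\<lambda>j. real_of_int (dist_multiple Q (r * b j))) I"

definition lattice_level :: "int \<Rightarrow> ('i \<Rightarrow> int) \<Rightarrow> 'i set \<Rightarrow> real \<Rightarrow> int set" where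
  "lattice_level Q b I t = {r \<in> {0..<Q}. lattice_dist Q b I r \<le> t}"

lemma lattice_level_subset: "lattice_level Q b I t \<subseteq> {0..<Q}"
  by (auto simp: lattice_level_def)

lemma finite_lattice_level [simp]: "finite (lattice_level Q b I t)"
  by (rule finite_subset[OF lattice_level_subset]) simp

lemma lattice_dist_nonneg: "lattice_dist Q b I r \<ge> 0"
  unfolding lattice_dist_def by (rule L2_set_nonneg)

lemma lattice_dist_0: "Q \<ge> 0 \<Longrightarrow> lattice_dist Q b I 0 = 0"
  unfolding lattice_dist_def by (simp add: dist_multiple_0 L2_set_def)

lemma lattice_dist_power2:
  "(lattice_dist Q b I r)\<^sup>2 = (\<Sum>j\<in>I. (real_of_int (dist_multiple Q (r * b j)))\<^sup>2)"
  unfolding lattice_dist_def L2_set_def by (simp add: sum_nonneg)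

lemma lattice_dist_add_le:
  assumes "Q > 0"
  shows "lattice_dist Q b I ((r + s) mod Q) \<le> lattice_dist Q b I r + lattice_dist Q b I s"
proof -
  have "dist_multiple Q ((r + s) mod Q * b j) = dist_multiple Q (r * b j + s * b j)" for j
  proof -
    have "((r + s) mod Q * b j) mod Q = (r * b j + s * b j) mod Q"
      by (metis distrib_right mod_mult_left_eq)
    then show ?thesis by (metis dist_multiple_mod)
  qed
  then have "lattice_dist Q b I ((r + s) mod Q)
      = L2_set (\<lambda>j. real_of_int (dist_multiple Q (r * b j + s * b j))) I"
    unfolding lattice_dist_def by simp
  also have "\<dots> \<le> L2_set (\<lambda>j. real_of_int (dist_multiple Q (r * b j))
      + real_of_int (dist_multiple Q (s * b j))) I"
  proof (rule L2_set_mono)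
    fix j
    show "real_of_int (dist_multiple Q (r * b j + s * b j))
        \<le> real_of_int (dist_multiple Q (r * b j)) + real_of_int (dist_multiple Q (s * b j))"
      using dist_multiple_add_le[OF assms, of "r * b j" "s * b j"]
      by (simp only: of_int_add[symmetric] of_int_le_iff)
    show "0 \<le> real_of_int (dist_multiple Q (r * b j + s * b j))"
      using dist_multiple_nonneg[OF assms] by simp
  qed
  also have "\<dots> \<le> lattice_dist Q b I r + lattice_dist Q b I s"
    unfolding lattice_dist_def by (rule L2_set_triangle_ineq)
  finally show ?thesis .
qed

lemma iter_sumset_lattice_level_subset:
  assumes Q: "Q > 0"
  shows "iter_sumset_mod Q k (lattice_level Q b I t) \<subseteq> lattice_level Q b I (real k * t)"
proof (induction k)
  case 0 then show ?case using Q by (simp add: lattice_level_def lattice_dist_0)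
next
  case (Suc k)
  show ?case
  proof
    fix x assume "x \<in> iter_sumset_mod Q (Suc k) (lattice_level Q b I t)"
    then obtain y a where y: "y \<in> lattice_level Q b I (real k * t)" and a: "a \<in> lattice_level Q b I t"
      and x: "x = (y + a) mod Q"
      using Suc.IH by (auto simp: sumset_mod_iff)
    have "lattice_dist Q b I x \<le> lattice_dist Q b I y + lattice_dist Q b I a"
      unfolding x by (rule lattice_dist_add_le[OF Q])
    also have "\<dots> \<le> real (Suc k) * t" using y a by (auto simp: lattice_level_def algebra_simps)
    finally show "x \<in> lattice_level Q b I (real (Suc k) * t)"
      using Q by (auto simp: lattice_level_def x)
  qed
qed

lemma card_lattice_level_le:
  fixes Q :: int
  assumes Q: "prime Q" and t: "0 < t" "t \<le> t0"
    and M: "real (card (lattice_level Q b I t0)) \<le> M" "M < Q"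
  shows "real (card (lattice_level Q b I t)) \<le> 2 * M * t / t0 + 1"
proof -
  have Qpos: "Q > 0" using Q prime_gt_0_int by blast
  define k where "k = nat \<lfloor>t0 / t\<rfloor>"
  have k1: "k \<ge> 1" and kt: "real k * t \<le> t0" and k_ge: "real k \<ge> t0 / t / 2"
  proof -
    have y1: "t0 / t \<ge> 1" using t by simp
    then show "k \<ge> 1" by (simp add: k_def le_nat_floor)
    have "real k = of_int \<lfloor>t0 / t\<rfloor>" using y1 by (simp add: k_def)
    then have le: "real k \<le> t0 / t" and gt: "real k > t0 / t - 1" by linarith+
    from le show "real k * t \<le> t0" using t by (simp add: field_simps)
    have "real k \<ge> 1" using \<open>k \<ge> 1\<close> by simp
    with gt have "t0 / t \<le> 2 * real k" by linarith
    then show "real k \<ge> t0 / t / 2" by simp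
  qed
  let ?L = "lattice_level Q b I t"
  \<comment> \<open>the \<open>k\<close>-fold sumset of \<open>?L\<close> lies in the level set of \<open>k t \<le> t0\<close>\<close>
  have "?L \<noteq> {}" using Qpos t by (auto simp: lattice_level_def lattice_dist_0 intro!: exI[of _ 0])
  then have cd: "min Q (int k * int (card ?L) - int k + 1) \<le> int (card (iter_sumset_mod Q k ?L))"
    by (intro card_iter_sumset_mod[OF Q lattice_level_subset])
  have "card (iter_sumset_mod Q k ?L) \<le> card (lattice_level Q b I t0)"
  proof (rule card_mono)
    show "finite (lattice_level Q b I t0)" by simp
    have "lattice_level Q b I (real k * t) \<subseteq> lattice_level Q b I t0"
      using kt by (auto simp: lattice_level_def)
    then show "iter_sumset_mod Q k ?L \<subseteq> lattice_level Q b I t0"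
      using iter_sumset_lattice_level_subset[OF Qpos] by (rule subset_trans[rotated])
  qed
  with cd have "real_of_int (min Q (int k * int (card ?L) - int k + 1)) \<le> M"
    using M(1) by (metis of_int_le_iff of_int_of_nat_eq of_nat_mono order_trans)
  then have "real k * real (card ?L) - real k + 1 \<le> M"
    using M(2) by (auto simp: min_def split: if_splits)
  then have "real (card ?L) \<le> M / real k + 1" using k1 by (simp add: field_simps)
  also have "M / real k \<le> M / (t0 / t / 2)"
  proof (rule divide_left_mono[OF k_ge])
    show "0 \<le> M" using M(1) of_nat_0_le_iff order_trans by blast
    show "0 < real k * (t0 / t / 2)" using k1 t by simp
  qed
  finally show ?thesis using t by (simp add: field_simps)
qed

section \<open>Additive characters modulo \<open>Q\<close>\<close>

definition unity_root :: "int \<Rightarrow> int \<Rightarrow> complex" where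
  "unity_root Q z = cis (2 * pi * real_of_int z / real_of_int Q)"

lemma unity_root_add: "unity_root Q (z + w) = unity_root Q z * unity_root Q w"
  unfolding unity_root_def cis_mult by (simp add: add_divide_distrib distrib_left)

lemma unity_root_0: "unity_root Q 0 = 1"
  unfolding unity_root_def by simp

lemma unity_root_sum: "finite A \<Longrightarrow> unity_root Q (\<Sum>j\<in>A. f j) = (\<Prod>j\<in>A. unity_root Q (f j))"
  by (induction A rule: finite_induct) (simp_all add: unity_root_0 unity_root_add)

lemma norm_unity_root [simp]: "norm (unity_root Q z) = 1"
  unfolding unity_root_def by simp

lemma cnj_unity_root: "cnj (unity_root Q z) = unity_root Q (- z)"
  unfolding unity_root_def cis_cnj by simp

lemma Re_unity_root: "Re (unity_root Q z) = cos (2 * pi * real_of_int z / real_of_int Q)"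
  unfolding unity_root_def by simp

lemma Im_unity_root: "Im (unity_root Q z) = sin (2 * pi * real_of_int z / real_of_int Q)"
  unfolding unity_root_def by simp

lemma unity_root_pow: "unity_root Q (int n * z) = unity_root Q z ^ n"
proof -
  have "unity_root Q z ^ n = cis (real n * (2 * pi * real_of_int z / real_of_int Q))"
    unfolding unity_root_def by (rule Complex.DeMoivre)
  then show ?thesis unfolding unity_root_def by (simp add: algebra_simps)
qed

lemma unity_root_eq_1_iff:
  assumes "Q > 0" shows "unity_root Q z = 1 \<longleftrightarrow> Q dvd z"
proof
  assume "Q dvd z"
  then obtain k where k: "z = Q * k" by auto
  have "2 * pi * real_of_int z / real_of_int Q = 2 * pi * real_of_int k" using assms by (simp add: k)
  then show "unity_root Q z = 1" unfolding unity_root_def by simp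
next
  assume "unity_root Q z = 1"
  then have "cos (2 * pi * real_of_int z / real_of_int Q) = 1" using Re_unity_root[of Q z] by simp
  then obtain n :: int where "2 * pi * real_of_int z / real_of_int Q = of_int n * 2 * pi"
    using cos_one_2pi_int by blast
  then have "real_of_int z = real_of_int (n * Q)" using assms by (simp add: field_simps)
  then have "z = n * Q" using of_int_eq_iff by blast
  then show "Q dvd z" by simp
qed

lemma sum_unity_root:
  assumes Q: "Q > 0"
  shows "(\<Sum>r\<in>{0..<Q}. unity_root Q (r * z)) = (if Q dvd z then of_int Q else 0)"
proof -
  have "(\<Sum>r\<in>{0..<Q}. unity_root Q (r * z)) = (\<Sum>i<nat Q. unity_root Q z ^ i)"
  proof -
    have "{0..<Q} = int ` {0..<nat Q}" using Q by (simp add: image_int_atLeastLessThan)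
    then show ?thesis by (simp add: sum.reindex lessThan_atLeast0 unity_root_pow)
  qed
  also have "\<dots> = (if Q dvd z then of_int Q else 0)"
  proof (cases "Q dvd z")
    case True
    then have "unity_root Q z = 1" using unity_root_eq_1_iff[OF Q] by simp
    then show ?thesis using True Q by simp
  next
    case False
    then have ne: "unity_root Q z \<noteq> 1" using unity_root_eq_1_iff[OF Q] by simp
    have "unity_root Q z ^ nat Q = unity_root Q (int (nat Q) * z)" by (rule unity_root_pow[symmetric])
    also have "\<dots> = unity_root Q (Q * z)" using Q by simp
    also have "\<dots> = 1" using Q by (simp add: unity_root_eq_1_iff)
    finally have "unity_root Q z ^ nat Q = 1" .
    then show ?thesis using False ne by (simp add: geometric_sum)
  qed
  finally show ?thesis .
qed

lemma sum_PiE_fourier: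
  fixes Q :: int and a :: "'i \<Rightarrow> int" and p :: "int \<Rightarrow> real" and V :: "int set"
  assumes Q: "Q > 0" and fin: "finite I" "finite V"
    and range: "\<And>x. x \<in> PiE I (\<lambda>_. V) \<Longrightarrow>
      Q dvd ((\<Sum>j\<in>I. x j * a j) - m) \<longleftrightarrow> (\<Sum>j\<in>I. x j * a j) = m"
  shows "of_int Q *
      complex_of_real (\<Sum>x\<in>{x \<in> PiE I (\<lambda>_. V). (\<Sum>j\<in>I. x j * a j) = m}. \<Prod>j\<in>I. p (x j))
    = (\<Sum>r\<in>{0..<Q}. unity_root Q (- (r * m)) *
        (\<Prod>j\<in>I. \<Sum>v\<in>V. complex_of_real (p v) * unity_root Q (r * v * a j)))"
proof -
  let ?X = "PiE I (\<lambda>_. V)"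
  let ?s = "\<lambda>x. \<Sum>j\<in>I. x j * a j" and ?w = "\<lambda>x. complex_of_real (\<Prod>j\<in>I. p (x j))"
  have prod_eq: "(\<Prod>j\<in>I. \<Sum>v\<in>V. complex_of_real (p v) * unity_root Q (r * v * a j))
      = (\<Sum>x\<in>?X. ?w x * unity_root Q (r * ?s x))" for r
  proof -
    have "(\<Prod>j\<in>I. \<Sum>v\<in>V. complex_of_real (p v) * unity_root Q (r * v * a j))
        = (\<Sum>x\<in>?X. \<Prod>j\<in>I. complex_of_real (p (x j)) * unity_root Q (r * x j * a j))"
      using fin by (rule prod_sum_PiE)
    also have "\<dots> = (\<Sum>x\<in>?X. ?w x * unity_root Q (r * ?s x))"
      using fin by (simp add: prod.distrib sum_distrib_left unity_root_sum mult.assoc)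
    finally show ?thesis .
  qed
  have "(\<Sum>r\<in>{0..<Q}. unity_root Q (- (r * m)) *
        (\<Prod>j\<in>I. \<Sum>v\<in>V. complex_of_real (p v) * unity_root Q (r * v * a j)))
      = (\<Sum>r\<in>{0..<Q}. unity_root Q (- (r * m)) * (\<Sum>x\<in>?X. ?w x * unity_root Q (r * ?s x)))"
    by (simp only: prod_eq)
  also have "\<dots> = (\<Sum>r\<in>{0..<Q}. \<Sum>x\<in>?X.
      ?w x * (unity_root Q (r * ?s x) * unity_root Q (- (r * m))))"
    by (simp add: sum_distrib_left algebra_simps)
  also have "\<dots> = (\<Sum>r\<in>{0..<Q}. \<Sum>x\<in>?X. ?w x * unity_root Q (r * (?s x - m)))"
    by (simp add: unity_root_add[symmetric] algebra_simps)
  also have "\<dots> = (\<Sum>x\<in>?X. ?w x * (\<Sum>r\<in>{0..<Q}. unity_root Q (r * (?s x - m))))"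
    by (simp add: sum.swap[of _ "{0..<Q}"] sum_distrib_left)
  also have "\<dots> = (\<Sum>x\<in>?X. if ?s x = m then of_int Q * ?w x else 0)"
    using range by (intro sum.cong refl) (auto simp: sum_unity_root[OF Q])
  also have "\<dots> = of_int Q * complex_of_real (\<Sum>x\<in>{x \<in> ?X. ?s x = m}. \<Prod>j\<in>I. p (x j))"
    using fin by (simp add: finite_PiE sum.inter_filter[symmetric] sum_distrib_left)
  finally show ?thesis by simp
qed

lemma parseval_unity_root:
  fixes Q :: int and b :: "'i \<Rightarrow> int"
  assumes Q: "Q > 0" and fin: "finite I" and inj: "inj_on (\<lambda>j. b j mod Q) I"
  shows "(\<Sum>r\<in>{0..<Q}. (norm (\<Sum>j\<in>I. unity_root Q (r * b j)))\<^sup>2) = real_of_int Q * real (card I)"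
proof -
  have "complex_of_real (\<Sum>r\<in>{0..<Q}. (norm (\<Sum>j\<in>I. unity_root Q (r * b j)))\<^sup>2)
      = (\<Sum>r\<in>{0..<Q}. (\<Sum>i\<in>I. unity_root Q (r * b i)) * cnj (\<Sum>j\<in>I. unity_root Q (r * b j)))"
    by (simp only: of_real_sum complex_norm_square)
  also have "\<dots> = (\<Sum>r\<in>{0..<Q}. \<Sum>i\<in>I. \<Sum>j\<in>I. unity_root Q (r * (b i - b j)))"
  proof -
    have "unity_root Q (r * b i) * cnj (unity_root Q (r * b j)) = unity_root Q (r * (b i - b j))" for r i j
      by (simp add: cnj_unity_root unity_root_add[symmetric] right_diff_distrib)
    then show ?thesis by (simp only: cnj_sum sum_product)
  qed
  also have "\<dots> = (\<Sum>i\<in>I. \<Sum>j\<in>I. \<Sum>r\<in>{0..<Q}. unity_root Q (r * (b i - b j)))"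
    by (simp add: sum.swap[of _ "{0..<Q}"])
  also have "\<dots> = (\<Sum>i\<in>I. \<Sum>j\<in>I. if j = i then complex_of_int Q else 0)"
  proof (intro sum.cong refl)
    fix i j assume i: "i \<in> I" and j: "j \<in> I"
    have "Q dvd (b i - b j) \<longleftrightarrow> b i mod Q = b j mod Q" by (simp add: mod_eq_dvd_iff)
    also have "\<dots> \<longleftrightarrow> j = i" using inj i j unfolding inj_on_def by blast
    finally show "(\<Sum>r\<in>{0..<Q}. unity_root Q (r * (b i - b j)))
        = (if j = i then complex_of_int Q else 0)"
      by (simp add: sum_unity_root[OF Q])
  qed
  also have "\<dots> = complex_of_real (real_of_int Q * real (card I))"
    using fin by simp
  finally show ?thesis by (simp only: of_real_eq_iff)
qed

section \<open>The characteristic function of a ternary variable\<close>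

lemma sin_ge_third:
  fixes x :: real assumes "0 \<le> x" "x \<le> 2" shows "sin x \<ge> x / 3"
proof -
  have b: "\<bar>sin x - (\<Sum>m<3. sin_coeff m * x ^ m)\<bar> \<le> inverse (fact 3) * \<bar>x\<bar> ^ 3"
    by (rule Maclaurin_sin_bound)
  have s: "(\<Sum>m<3. sin_coeff m * x ^ m) = x"
  proof -
    have "(\<Sum>m<(3::nat). sin_coeff m * x ^ m) = sin_coeff 0 * x^0 + sin_coeff 1 * x^1 + sin_coeff 2 * x^2"
      by (simp add: eval_nat_numeral)
    also have "\<dots> = x" by (simp add: sin_coeff_def)
    finally show ?thesis .
  qed
  have f: "inverse (fact 3) * \<bar>x\<bar> ^ 3 = x ^ 3 / 6"
  proof -
    have "(fact 3 :: real) = 6" by (simp add: eval_nat_numeral)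
    moreover have "\<bar>x\<bar> = x" using assms by simp
    ultimately show ?thesis by (simp only:) (simp add: field_simps)
  qed
  have "\<bar>sin x - x\<bar> \<le> x ^ 3 / 6" using b unfolding s f .
  moreover have "- \<bar>sin x - x\<bar> \<le> sin x - x" by (cases "sin x - x \<ge> 0") auto
  ultimately have "sin x \<ge> x - x ^ 3 / 6" by linarith
  moreover have "x ^ 3 \<le> 4 * x"
  proof -
    have xx: "x * x \<le> 2 * 2" by (rule mult_mono) (use assms in auto)
    have "x ^ 3 = x * (x * x)" by (simp add: power3_eq_cube)
    also have "\<dots> \<le> x * 4" using xx assms(1) by (intro mult_left_mono) auto
    finally show ?thesis by simp
  qed
  ultimately show ?thesis by linarith
qed

lemma cos_ge_one_minus_square: "cos y \<ge> 1 - y\<^sup>2 / 2" for y :: real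
proof -
  have "cos y = cos (2 * (y / 2))" by simp
  also have "\<dots> = 1 - 2 * (sin (y / 2))\<^sup>2" by (rule cos_double_sin)
  finally have c: "cos y = 1 - 2 * (sin (y / 2))\<^sup>2" .
  have "(sin (y / 2))\<^sup>2 \<le> (y / 2)\<^sup>2"
  proof -
    have "\<bar>sin (y / 2)\<bar> ^ 2 \<le> \<bar>y / 2\<bar> ^ 2" by (rule power_mono[OF abs_sin_x_le_abs_x abs_ge_zero])
    then show ?thesis by (simp only: power2_abs)
  qed
  then show ?thesis unfolding c by (simp add: power_divide)
qed

lemma one_minus_cos_ge_dist_multiple:
  fixes Q z :: int assumes Q: "Q > 0"
  shows "1 - cos (2 * pi * real_of_int z / real_of_int Q)
    \<ge> 2 * real_of_int (dist_multiple Q z) ^ 2 / real_of_int Q ^ 2"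
proof -
  define d where "d = real_of_int (dist_multiple Q z)"
  have d0: "0 \<le> d" using dist_multiple_nonneg[OF Q] by (simp add: d_def)
  have dh: "2 * d \<le> real_of_int Q" using dist_multiple_le_half[OF Q, of z] by (simp add: d_def)
  define x where "x = pi * d / real_of_int Q"
  have x0: "0 \<le> x" using d0 Q by (simp add: x_def)
  have x2: "x \<le> 2"
  proof -
    have "x \<le> pi / 2" using dh Q by (simp add: x_def field_simps)
    then show ?thesis using pi_less_4 by linarith
  qed
  have "cos (2 * pi * real_of_int z / real_of_int Q) = cos (2 * pi * d / real_of_int Q)"
    unfolding d_def by (rule cos_dist_multiple[OF Q])
  also have "\<dots> = cos (2 * x)" by (simp add: x_def mult.assoc)
  also have "\<dots> = 1 - 2 * (sin x)\<^sup>2" by (rule cos_double_sin)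
  finally have c: "1 - cos (2 * pi * real_of_int z / real_of_int Q) = 2 * (sin x)\<^sup>2" by simp
  have "(x / 3)\<^sup>2 \<le> (sin x)\<^sup>2" using sin_ge_third[OF x0 x2] x0 by (intro power_mono) auto
  moreover have "(x / 3)\<^sup>2 = pi\<^sup>2 * d\<^sup>2 / (9 * real_of_int Q ^ 2)"
    by (simp add: x_def power_divide power_mult_distrib)
  moreover have "pi\<^sup>2 * d\<^sup>2 / (9 * real_of_int Q ^ 2) \<ge> d\<^sup>2 / real_of_int Q ^ 2"
  proof -
    have "3 * 3 \<le> pi * pi" using pi_gt3 by (intro mult_mono) auto
    then have "pi\<^sup>2 \<ge> 9" by (simp add: power2_eq_square)
    then show ?thesis using Q by (simp add: field_simps mult_right_mono)
  qed
  ultimately show ?thesis unfolding c d_def by linarith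
qed

definition char_fun :: "(int \<Rightarrow> real) \<Rightarrow> int \<Rightarrow> int \<Rightarrow> complex" where
  "char_fun p Q z = (\<Sum>v\<in>{-1,0,1}. complex_of_real (p v) * unity_root Q (v * z))"

lemma norm_char_fun_power2:
  fixes p :: "int \<Rightarrow> real" and Q z :: int
  defines "c \<equiv> cos (2 * pi * real_of_int z / real_of_int Q)"
  assumes sum1: "p (-1) + p 0 + p 1 = 1"
  shows "(norm (char_fun p Q z)) ^ 2
     = 1 - 2 * p 0 * (p 1 + p (-1)) * (1 - c) - 4 * p 1 * p (-1) * (1 - c ^ 2)"
proof -
  define s where "s = sin (2 * pi * real_of_int z / real_of_int Q)"
  let ?S = "char_fun p Q z"
  have S: "?S = complex_of_real (p (-1)) * unity_root Q (- z) + complex_of_real (p 0)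
      + complex_of_real (p 1) * unity_root Q z"
    by (simp add: char_fun_def unity_root_0)
  have Re: "Re ?S = p 0 + (p 1 + p (-1)) * c"
    unfolding S by (simp add: Re_unity_root c_def algebra_simps)
  have Im: "Im ?S = (p 1 - p (-1)) * s"
    unfolding S by (simp add: Im_unity_root s_def algebra_simps)
  have sc: "s ^ 2 = 1 - c ^ 2" unfolding s_def c_def by (rule sin_squared_eq)
  have p0: "p 0 = 1 - p 1 - p (-1)" using sum1 by simp
  have "(norm ?S) ^ 2 = (p 0 + (p 1 + p (-1)) * c) ^ 2 + ((p 1 - p (-1)) * s) ^ 2"
    unfolding cmod_power2 Re Im ..
  also have "\<dots> = (p 0 + (p 1 + p (-1)) * c) ^ 2 + (p 1 - p (-1)) ^ 2 * (1 - c ^ 2)"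
    by (simp add: power_mult_distrib sc)
  also have "\<dots> = 1 - 2 * p 0 * (p 1 + p (-1)) * (1 - c) - 4 * p 1 * p (-1) * (1 - c ^ 2)"
  proof -
    have gen: "(a0 + (a1 + am) * c) ^ 2 + (a1 - am) ^ 2 * (1 - c ^ 2)
        = 1 - 2 * a0 * (a1 + am) * (1 - c) - 4 * a1 * am * (1 - (c::real) ^ 2)"
      if "a0 = 1 - a1 - am" for a0 a1 am
      using that by algebra
    show ?thesis by (rule gen[OF p0])
  qed
  finally show ?thesis .
qed

lemma le_exp_half_if_power2_le:
  fixes y r :: real assumes "r \<ge> 0" "r ^ 2 \<le> 1 - y" shows "r \<le> exp (- y / 2)"
proof -
  have "1 - y \<le> exp (- y)" using exp_ge_add_one_self[of "-y"] by simp
  also have "exp (- y) = exp (- y / 2) * exp (- y / 2)" by (simp add: exp_add[symmetric])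
  also have "\<dots> = (exp (- y / 2)) ^ 2" by (simp add: power2_eq_square)
  finally have "r ^ 2 \<le> (exp (- y / 2)) ^ 2" using assms(2) by linarith
  then show ?thesis by (rule power2_le_imp_le) simp
qed

lemma norm_char_fun_le_exp_dist:
  fixes p :: "int \<Rightarrow> real"
  assumes nn: "\<And>v. p v \<ge> 0" and sum1: "p (-1) + p 0 + p 1 = 1" and Q: "Q > 0"
  shows "norm (char_fun p Q z)
    \<le> exp (- (2 * p 0 * (p 1 + p (-1))) * real_of_int (dist_multiple Q z) ^ 2 / real_of_int Q ^ 2)"
proof -
  define c where "c = cos (2 * pi * real_of_int z / real_of_int Q)"
  define D where "D = real_of_int (dist_multiple Q z) ^ 2 / real_of_int Q ^ 2"
  have c1: "1 - c \<ge> 2 * D" using one_minus_cos_ge_dist_multiple[OF Q, of z] by (simp add: c_def D_def)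
  have "1 - c ^ 2 \<ge> 0" using abs_cos_le_one[of "2 * pi * real_of_int z / real_of_int Q"]
    by (simp add: c_def abs_square_le_1)
  then have "(norm (char_fun p Q z)) ^ 2 \<le> 1 - 2 * p 0 * (p 1 + p (-1)) * (1 - c)"
    using norm_char_fun_power2[OF sum1, of Q z] nn by (simp add: c_def)
  also have "\<dots> \<le> 1 - 2 * p 0 * (p 1 + p (-1)) * (2 * D)"
    using c1 nn by (intro diff_left_mono mult_left_mono) auto
  finally have "norm (char_fun p Q z) \<le> exp (- (2 * p 0 * (p 1 + p (-1)) * (2 * D)) / 2)"
    by (rule le_exp_half_if_power2_le[OF norm_ge_zero])
  then show ?thesis by (simp add: D_def mult.assoc)
qed

lemma norm_char_fun_le_exp_dist_double:
  fixes p :: "int \<Rightarrow> real"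
  assumes nn: "\<And>v. p v \<ge> 0" and sum1: "p (-1) + p 0 + p 1 = 1" and p0: "p 0 = 0" and Q: "Q > 0"
  shows "norm (char_fun p Q z)
    \<le> exp (- (2 * p 1 * p (-1)) * real_of_int (dist_multiple Q (2 * z)) ^ 2 / real_of_int Q ^ 2)"
proof -
  define x where "x = 2 * pi * real_of_int z / real_of_int Q"
  define D where "D = real_of_int (dist_multiple Q (2 * z)) ^ 2 / real_of_int Q ^ 2"
  have "cos (2 * pi * real_of_int (2 * z) / real_of_int Q) = 1 - 2 * (sin x) ^ 2"
    using cos_double_sin[of x] by (simp add: x_def mult.assoc)
  then have "1 - (cos x) ^ 2 \<ge> D"
    using one_minus_cos_ge_dist_multiple[OF Q, of "2 * z"] by (simp add: D_def sin_squared_eq)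
  then have "(norm (char_fun p Q z)) ^ 2 \<le> 1 - 4 * p 1 * p (-1) * D"
    using norm_char_fun_power2[OF sum1, of Q z] p0 nn
    by (simp add: x_def) (intro mult_left_mono; simp)
  then have "norm (char_fun p Q z) \<le> exp (- (4 * p 1 * p (-1) * D) / 2)"
    by (rule le_exp_half_if_power2_le[OF norm_ge_zero])
  then show ?thesis by (simp add: D_def mult.assoc)
qed

lemma norm_char_fun_le_exp:
  fixes p :: "int \<Rightarrow> real"
  assumes nn: "\<And>v. p v \<ge> 0" and sum1: "p (-1) + p 0 + p 1 = 1"
    and lt: "p (-1) < 1" "p 0 < 1" "p 1 < 1"
  obtains \<kappa> h where "\<kappa> > 0" "h \<in> {1, 2}"
    "\<And>Q z. Q > 0 \<Longrightarrow> norm (char_fun p Q z)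
       \<le> exp (- \<kappa> * real_of_int (dist_multiple Q (h * z)) ^ 2 / real_of_int Q ^ 2)"
\<comment> \<open>if \<open>P(\<xi> = 0) = 0\<close> then \<open>|char_fun p Q z|\<close> has period \<open>Q/2\<close> in \<open>z\<close>, so only \<open>2 z\<close> can be controlled\<close>
proof (cases "p 0 > 0")
  case True
  then have "2 * p 0 * (p 1 + p (-1)) > 0" using sum1 lt(2) by simp
  then show ?thesis
    by (rule that[of _ 1]) (use norm_char_fun_le_exp_dist[OF nn sum1] in auto)
next
  case False
  then have p0: "p 0 = 0" using nn[of 0] by simp
  then have "2 * p 1 * p (-1) > 0" using sum1 lt by simp
  then show ?thesis
    by (rule that[of _ 2]) (use norm_char_fun_le_exp_dist_double[OF nn sum1 p0] in auto)
qed

section \<open>Level sets of the lattice distance and the exponential sum\<close>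

lemma Re_sum_unity_root_ge:
  assumes Q: "Q > 0"
  shows "Re (\<Sum>j\<in>I. unity_root Q (r * b j))
    \<ge> card I - 2 * pi\<^sup>2 * (lattice_dist Q b I r)\<^sup>2 / real_of_int Q ^ 2"
proof -
  have "Re (\<Sum>j\<in>I. unity_root Q (r * b j))
      = (\<Sum>j\<in>I. cos (2 * pi * real_of_int (r * b j) / real_of_int Q))"
    by (simp add: Re_unity_root)
  also have "\<dots> = (\<Sum>j\<in>I. cos (2 * pi * real_of_int (dist_multiple Q (r * b j)) / real_of_int Q))"
    by (intro sum.cong refl cos_dist_multiple[OF Q])
  also have "\<dots> \<ge> (\<Sum>j\<in>I. 1 - (2 * pi\<^sup>2 / real_of_int Q ^ 2) * (real_of_int (dist_multiple Q (r * b j)))\<^sup>2)"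
    by (intro sum_mono order_trans[OF _ cos_ge_one_minus_square])
      (simp add: power_divide power_mult_distrib)
  also have "(\<Sum>j\<in>I. 1 - (2 * pi\<^sup>2 / real_of_int Q ^ 2) * (real_of_int (dist_multiple Q (r * b j)))\<^sup>2)
      = card I - 2 * pi\<^sup>2 * (lattice_dist Q b I r)\<^sup>2 / real_of_int Q ^ 2"
    by (simp add: lattice_dist_power2 sum_subtractf sum_distrib_left sum_divide_distrib)
  finally show ?thesis .
qed

lemma card_lattice_level_small:
  fixes Q :: int and b :: "'i \<Rightarrow> int"
  assumes Q: "Q > 0" and fin: "finite I" and n: "card I \<ge> 1" and inj: "inj_on (\<lambda>j. b j mod Q) I"
  shows "real (card (lattice_level Q b I (real_of_int Q * sqrt (real (card I) / 40))))
    \<le> 4 * real_of_int Q / real (card I)"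
proof -
  define n where "n = real (card I)"
  have n1: "n \<ge> 1" using n by (simp add: n_def)
  define L where "L = lattice_level Q b I (real_of_int Q * sqrt (n / 40))"
  let ?S = "\<lambda>r. \<Sum>j\<in>I. unity_root Q (r * b j)"
  have pi2: "pi\<^sup>2 \<le> 10"
  proof -
    have "pi * pi \<le> 3.15 * 3.15" using pi_approx by (intro mult_mono) auto
    then show ?thesis by (simp add: power2_eq_square)
  qed
  \<comment> \<open>on \<open>L\<close> the character sums are large, while Parseval bounds their total mass\<close>
  have big: "(norm (?S r))\<^sup>2 \<ge> n\<^sup>2 / 4" if r: "r \<in> L" for r
  proof -
    have "(lattice_dist Q b I r)\<^sup>2 \<le> (real_of_int Q * sqrt (n / 40))\<^sup>2"
      using r lattice_dist_nonneg[of Q b I r] unfolding L_def lattice_level_def by (auto intro: power_mono)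
    also have "\<dots> = real_of_int Q ^ 2 * n / 40"
      using n1 by (simp add: power_mult_distrib)
    finally have "pi\<^sup>2 * (lattice_dist Q b I r)\<^sup>2 \<le> 10 * (real_of_int Q ^ 2 * n / 40)"
      using pi2 by (intro mult_mono) auto
    then have "2 * pi\<^sup>2 * (lattice_dist Q b I r)\<^sup>2 / real_of_int Q ^ 2 \<le> n / 2"
      using Q by (simp add: field_simps)
    then have "Re (?S r) \<ge> n / 2"
      using Re_sum_unity_root_ge[OF Q, where I=I and r=r and b=b] by (simp add: n_def)
    then have "(n / 2)\<^sup>2 \<le> (norm (?S r))\<^sup>2"
      using n1 complex_Re_le_cmod[of "?S r"] by (intro power_mono) auto
    then show ?thesis by (simp add: power_divide)
  qed
  have "real (card L) * (n\<^sup>2 / 4) = (\<Sum>r\<in>L. n\<^sup>2 / 4)" by simp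
  also have "\<dots> \<le> (\<Sum>r\<in>L. (norm (?S r))\<^sup>2)" by (intro sum_mono big)
  also have "\<dots> \<le> (\<Sum>r\<in>{0..<Q}. (norm (?S r))\<^sup>2)"
    by (intro sum_mono2) (auto simp: L_def lattice_level_def)
  also have "\<dots> = real_of_int Q * n" unfolding n_def by (rule parseval_unity_root[OF Q fin inj])
  finally have "real (card L) * (n\<^sup>2 / 4) \<le> real_of_int Q * n" .
  then have "real (card L) \<le> 4 * real_of_int Q / n" using n1 by (simp add: field_simps power2_eq_square)
  then show ?thesis by (simp add: L_def n_def)
qed

lemma sum_half_power_le: "(\<Sum>l<K. (1/2::real) ^ l) \<le> 2"
proof -
  have "(\<Sum>l<K. (1/2::real) ^ l) = 2 - 2 * (1/2) ^ K"
    by (induction K) (simp_all add: field_simps)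
  then show ?thesis by simp
qed

lemma sum_Suc_times_half_power_eq:
  "(\<Sum>l<K. (real l + 1) * (1/2::real) ^ l) = 4 - (2 * real K + 4) * (1/2) ^ K"
proof (induction K)
  case 0 then show ?case by simp
next
  case (Suc K)
  have e: "(1/2::real)^(Suc K) = (1/2)^K/2" by simp
  have "(\<Sum>l<Suc K. (real l + 1) * (1/2::real) ^ l)
      = 4 - (2 * real K + 4) * (1/2) ^ K + (real K + 1) * (1/2) ^ K"
    using Suc by simp
  also have "\<dots> = 4 - (2 * real (Suc K) + 4) * (1/2) ^ (Suc K)"
    unfolding e by (simp add: algebra_simps)
  finally show ?case .
qed

lemma sum_Suc_times_half_power_le: "(\<Sum>l<K. (real l + 1) * (1/2::real) ^ l) \<le> 4"
  unfolding sum_Suc_times_half_power_eq by simp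

lemma exp_minus_le_half_power: "exp (- real l) \<le> (1/2::real) ^ l"
proof -
  have "exp (-1::real) \<le> 1/2"
  proof -
    have "2 \<le> exp (1::real)" using exp_ge_add_one_self[of 1] by simp
    then show ?thesis by (simp add: exp_minus field_simps)
  qed
  then have "exp (-1::real) ^ l \<le> (1/2) ^ l" by (intro power_mono) auto
  moreover have "exp (-1::real) ^ l = exp (- real l)" by (simp add: exp_of_nat_mult[symmetric])
  ultimately show ?thesis by simp
qed

lemma sum_exp_minus_square_le:
  fixes g :: "'a \<Rightarrow> real" and u c :: real
  assumes fin: "finite R" and u: "u > 0" and c: "c \<ge> 0" and g: "\<And>r. r \<in> R \<Longrightarrow> g r \<ge> 0"
    and layers: "\<And>k::nat. real (card {r \<in> R. g r < (real k + 1) * u}) \<le> c * (real k + 1) + 1"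
  shows "(\<Sum>r\<in>R. exp (- (g r / u)\<^sup>2)) \<le> 4 * c + 2"
proof -
  define l where "l = (\<lambda>r. nat \<lfloor>g r / u\<rfloor>)"
  have l: "real (l r) \<le> g r / u" "g r / u < real (l r) + 1" if "r \<in> R" for r
    using g[OF that] u by (simp_all add: l_def)
  have exp_le: "exp (- (g r / u)\<^sup>2) \<le> (1/2) ^ l r" if r: "r \<in> R" for r
  proof -
    have "real (l r) \<le> real (l r) ^ 2" by (cases "l r") (auto simp: power2_eq_square)
    also have "\<dots> \<le> (g r / u)\<^sup>2" using l(1)[OF r] by (intro power_mono) auto
    finally have "exp (- (g r / u)\<^sup>2) \<le> exp (- real (l r))" by simp
    also have "\<dots> \<le> (1/2) ^ l r" by (rule exp_minus_le_half_power)
    finally show ?thesis .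
  qed
  have bucket: "real (card {r \<in> R. l r = k}) \<le> c * (real k + 1) + 1" for k
  proof -
    have "{r \<in> R. l r = k} \<subseteq> {r \<in> R. g r < (real k + 1) * u}"
      using l(2) u by (auto simp: field_simps)
    then have "card {r \<in> R. l r = k} \<le> card {r \<in> R. g r < (real k + 1) * u}"
      using fin by (intro card_mono) auto
    then show ?thesis using layers[of k] by linarith
  qed
  obtain K where K: "l ` R \<subseteq> {..<K}" using finite_nat_bounded[OF finite_imageI[OF fin]] by blast
  have "(\<Sum>r\<in>R. exp (- (g r / u)\<^sup>2)) \<le> (\<Sum>r\<in>R. (1/2) ^ l r)" by (intro sum_mono exp_le)
  also have "\<dots> = (\<Sum>k\<in>l ` R. \<Sum>r\<in>{r \<in> R. l r = k}. (1/2) ^ l r)"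
    by (rule sum.image_gen[OF fin])
  also have "\<dots> = (\<Sum>k\<in>l ` R. (1/2) ^ k * real (card {r \<in> R. l r = k}))"
    by (rule sum.cong[OF refl]) simp
  also have "\<dots> \<le> (\<Sum>k\<in>l ` R. (1/2) ^ k * (c * (real k + 1) + 1))"
    by (intro sum_mono mult_left_mono bucket) auto
  also have "\<dots> \<le> (\<Sum>k<K. (1/2) ^ k * (c * (real k + 1) + 1))"
    using K c by (intro sum_mono2) auto
  also have "\<dots> = c * (\<Sum>k<K. (real k + 1) * (1/2) ^ k) + (\<Sum>k<K. (1/2::real) ^ k)"
    by (simp add: sum.distrib sum_distrib_left algebra_simps)
  also have "\<dots> \<le> c * 4 + 2"
    using sum_Suc_times_half_power_le[of K] sum_half_power_le[of K] c
    by (intro add_mono mult_left_mono) auto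
  finally show ?thesis by simp
qed

lemma sum_exp_outside_lattice_level_le:
  fixes Q :: int
  assumes Q: "Q > 0" and \<kappa>: "\<kappa> \<ge> 0" and t: "t \<ge> 0"
  shows "(\<Sum>r\<in>{0..<Q} - lattice_level Q b I t. exp (- \<kappa> * (lattice_dist Q b I r)\<^sup>2 / real_of_int Q ^ 2))
    \<le> real_of_int Q * exp (- \<kappa> * t\<^sup>2 / real_of_int Q ^ 2)"
proof -
  let ?R = "{0..<Q} - lattice_level Q b I t"
  have "exp (- \<kappa> * (lattice_dist Q b I r)\<^sup>2 / real_of_int Q ^ 2) \<le> exp (- \<kappa> * t\<^sup>2 / real_of_int Q ^ 2)"
    if "r \<in> ?R" for r
  proof -
    have "t < lattice_dist Q b I r" using that by (auto simp: lattice_level_def)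
    then have "t\<^sup>2 \<le> (lattice_dist Q b I r)\<^sup>2" using t by (intro power_mono) auto
    then show ?thesis using \<kappa> Q by (simp add: divide_right_mono mult_left_mono)
  qed
  then have "(\<Sum>r\<in>?R. exp (- \<kappa> * (lattice_dist Q b I r)\<^sup>2 / real_of_int Q ^ 2))
      \<le> (\<Sum>r\<in>?R. exp (- \<kappa> * t\<^sup>2 / real_of_int Q ^ 2))"
    by (rule sum_mono)
  also have "\<dots> = real (card ?R) * exp (- \<kappa> * t\<^sup>2 / real_of_int Q ^ 2)" by simp
  also have "\<dots> \<le> real_of_int Q * exp (- \<kappa> * t\<^sup>2 / real_of_int Q ^ 2)"
  proof -
    have "card ?R \<le> card {0..<Q}" by (intro card_mono) auto
    then show ?thesis using Q by (intro mult_right_mono) auto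
  qed
  finally show ?thesis .
qed

lemma sum_exp_lattice_level_le:
  fixes Q :: int
  assumes Q: "prime Q" and t0: "t0 > 0" and \<kappa>: "\<kappa> > 0"
    and M: "real (card (lattice_level Q b I t0)) \<le> M" "M < Q"
  shows "(\<Sum>r\<in>lattice_level Q b I t0. exp (- \<kappa> * (lattice_dist Q b I r)\<^sup>2 / real_of_int Q ^ 2))
    \<le> 8 * M * real_of_int Q / (sqrt \<kappa> * t0) + 2"
proof -
  have Qpos: "Q > 0" using Q prime_gt_0_int by blast
  have M0: "M \<ge> 0" using M(1) of_nat_0_le_iff order_trans by blast
  define u where "u = real_of_int Q / sqrt \<kappa>"
  have u: "u > 0" using Qpos \<kappa> by (simp add: u_def)
  let ?R = "lattice_level Q b I t0"
  have "exp (- \<kappa> * (lattice_dist Q b I r)\<^sup>2 / real_of_int Q ^ 2) = exp (- (lattice_dist Q b I r / u)\<^sup>2)" for r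
    using \<kappa> Qpos by (simp add: u_def power_divide field_simps)
  moreover have "(\<Sum>r\<in>?R. exp (- (lattice_dist Q b I r / u)\<^sup>2)) \<le> 4 * (2 * M * u / t0) + 2"
  proof (rule sum_exp_minus_square_le)
    fix k :: nat
    define t where "t = min ((real k + 1) * u) t0"
    have t: "0 < t" "t \<le> t0" using u t0 by (auto simp: t_def)
    have "{r \<in> ?R. lattice_dist Q b I r < (real k + 1) * u} \<subseteq> lattice_level Q b I t"
      by (auto simp: lattice_level_def t_def)
    then have "real (card {r \<in> ?R. lattice_dist Q b I r < (real k + 1) * u})
        \<le> real (card (lattice_level Q b I t))"
      by (simp add: card_mono)
    also have "\<dots> \<le> 2 * M * t / t0 + 1" by (rule card_lattice_level_le[OF Q t M])
    also have "\<dots> \<le> 2 * M * ((real k + 1) * u) / t0 + 1"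
      using M0 t0 by (intro add_right_mono divide_right_mono mult_left_mono) (auto simp: t_def)
    also have "\<dots> = 2 * M * u / t0 * (real k + 1) + 1" by simp
    finally show "real (card {r \<in> ?R. lattice_dist Q b I r < (real k + 1) * u})
        \<le> 2 * M * u / t0 * (real k + 1) + 1" .
  qed (use u M0 t0 lattice_dist_nonneg in auto)
  moreover have "4 * (2 * M * u / t0) = 8 * M * real_of_int Q / (sqrt \<kappa> * t0)"
    by (simp add: u_def)
  ultimately show ?thesis by simp
qed

lemma sum_exp_lattice_dist_le:
  fixes Q :: int and b :: "'i \<Rightarrow> int" and \<kappa> :: real
  assumes Q: "prime Q" and fin: "finite I" and n5: "card I \<ge> 5"
    and inj: "inj_on (\<lambda>j. b j mod Q) I" and \<kappa>: "\<kappa> > 0"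
  shows "(\<Sum>r\<in>{0..<Q}. exp (- \<kappa> * (lattice_dist Q b I r)\<^sup>2 / real_of_int Q ^ 2))
    \<le> real_of_int Q * (32 * sqrt 40 / sqrt \<kappa>) / (real (card I) * sqrt (real (card I))) + 2
       + real_of_int Q * exp (- \<kappa> * real (card I) / 40)"
proof -
  have Qpos: "Q > 0" using Q prime_gt_0_int by blast
  define n where "n = real (card I)"
  have n5': "n \<ge> 5" using n5 by (simp add: n_def)
  define t0 where "t0 = real_of_int Q * sqrt (n / 40)"
  have t0: "t0 > 0" using Qpos n5' by (simp add: t0_def)
  define M where "M = 4 * real_of_int Q / n"
  have M: "real (card (lattice_level Q b I t0)) \<le> M" "M < real_of_int Q"
    using card_lattice_level_small[OF Qpos fin _ inj] n5 Qpos n5'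
    by (simp_all add: t0_def M_def n_def field_simps)
  define f where "f = (\<lambda>r. exp (- \<kappa> * (lattice_dist Q b I r)\<^sup>2 / real_of_int Q ^ 2))"
  have "(\<Sum>r\<in>{0..<Q}. f r) = (\<Sum>r\<in>{0..<Q} - lattice_level Q b I t0. f r) + (\<Sum>r\<in>lattice_level Q b I t0. f r)"
    by (rule sum.subset_diff) (simp_all add: lattice_level_subset)
  also have "\<dots> \<le> real_of_int Q * exp (- \<kappa> * t0\<^sup>2 / real_of_int Q ^ 2) + (8 * M * real_of_int Q / (sqrt \<kappa> * t0) + 2)"
    unfolding f_def using Qpos \<kappa> t0
    by (intro add_mono sum_exp_outside_lattice_level_le sum_exp_lattice_level_le[OF Q t0 \<kappa> M]) auto
  also have "- \<kappa> * t0\<^sup>2 / real_of_int Q ^ 2 = - \<kappa> * n / 40"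
    using Qpos n5' by (simp add: t0_def power_mult_distrib)
  also have "8 * M * real_of_int Q / (sqrt \<kappa> * t0) = real_of_int Q * (32 * sqrt 40 / sqrt \<kappa>) / (n * sqrt n)"
    using Qpos n5' \<kappa> by (simp add: M_def t0_def real_sqrt_divide field_simps)
  finally show ?thesis unfolding f_def n_def by linarith
qed

section \<open>Halasz's bound\<close>

definition point_prob :: "(int \<Rightarrow> real) \<Rightarrow> 'i set \<Rightarrow> ('i \<Rightarrow> int) \<Rightarrow> int \<Rightarrow> real" where
  "point_prob p I a m =
     (\<Sum>x\<in>{x \<in> PiE I (\<lambda>_. {-1, 0, 1}). (\<Sum>j\<in>I. x j * a j) = m}. \<Prod>j\<in>I. p (x j))"

lemma point_prob_nonneg: "(\<And>v. p v \<ge> 0) \<Longrightarrow> point_prob p I a m \<ge> 0"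
  unfolding point_prob_def by (intro sum_nonneg prod_nonneg) auto

lemma point_prob_le_1:
  fixes p :: "int \<Rightarrow> real"
  assumes nn: "\<And>v. p v \<ge> 0" and sum1: "p (-1) + p 0 + p 1 = 1" and fin: "finite I"
  shows "point_prob p I a m \<le> 1"
proof -
  have "point_prob p I a m \<le> (\<Sum>x\<in>PiE I (\<lambda>_. {-1, 0, 1}). \<Prod>j\<in>I. p (x j))"
    unfolding point_prob_def using fin by (intro sum_mono2) (auto simp: finite_PiE intro: prod_nonneg nn)
  also have "\<dots> = (\<Prod>j\<in>I. \<Sum>v\<in>{-1, 0, 1}. p v)"
    using fin by (rule prod_sum_PiE[symmetric]) auto
  also have "\<dots> = 1" using sum1 by (simp add: add.assoc)
  finally show ?thesis .
qed

lemma point_prob_fourier_le: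
  fixes p :: "int \<Rightarrow> real" and Q h :: int
  assumes Q: "Q > 0" and fin: "finite I" and nn: "\<And>v. p v \<ge> 0"
    and char: "\<And>z. norm (char_fun p Q z)
      \<le> exp (- \<kappa> * real_of_int (dist_multiple Q (h * z)) ^ 2 / real_of_int Q ^ 2)"
    and range: "\<And>x. x \<in> PiE I (\<lambda>_. {-1, 0, 1}) \<Longrightarrow>
      Q dvd ((\<Sum>j\<in>I. x j * a j) - m) \<longleftrightarrow> (\<Sum>j\<in>I. x j * a j) = m"
  shows "real_of_int Q * point_prob p I a m
    \<le> (\<Sum>r\<in>{0..<Q}. exp (- \<kappa> * (lattice_dist Q (\<lambda>j. h * a j) I r)\<^sup>2 / real_of_int Q ^ 2))"
proof -
  have char_eq:
    "(\<Sum>v\<in>{-1, 0, 1}. complex_of_real (p v) * unity_root Q (r * v * a j)) = char_fun p Q (r * a j)"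
    for r j by (simp add: char_fun_def mult.commute mult.left_commute)
  have four: "of_int Q * complex_of_real (point_prob p I a m)
      = (\<Sum>r\<in>{0..<Q}. unity_root Q (- (r * m)) * (\<Prod>j\<in>I. char_fun p Q (r * a j)))"
    unfolding point_prob_def char_eq[symmetric] by (rule sum_PiE_fourier[OF Q fin]) (simp_all add: range)
  have "real_of_int Q * point_prob p I a m = norm (of_int Q * complex_of_real (point_prob p I a m))"
    using Q point_prob_nonneg[of p I a m, OF nn] by (simp add: norm_mult)
  also have "\<dots> = norm (\<Sum>r\<in>{0..<Q}. unity_root Q (- (r * m)) * (\<Prod>j\<in>I. char_fun p Q (r * a j)))"
    by (simp only: four)
  also have "\<dots> \<le> (\<Sum>r\<in>{0..<Q}. \<Prod>j\<in>I. norm (char_fun p Q (r * a j)))"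
    by (rule order_trans[OF norm_sum sum_mono]) (simp add: norm_mult norm_prod_le)
  also have "\<dots> \<le> (\<Sum>r\<in>{0..<Q}. \<Prod>j\<in>I.
      exp (- \<kappa> * real_of_int (dist_multiple Q (r * (h * a j))) ^ 2 / real_of_int Q ^ 2))"
    by (intro sum_mono prod_mono conjI norm_ge_zero order_trans[OF char]) (simp add: algebra_simps)
  also have "\<dots> = (\<Sum>r\<in>{0..<Q}. exp (- \<kappa> * (lattice_dist Q (\<lambda>j. h * a j) I r)\<^sup>2 / real_of_int Q ^ 2))"
    using fin by (simp add: exp_sum[symmetric] lattice_dist_power2 sum_divide_distrib sum_distrib_left)
  finally show ?thesis .
qed

lemma exp_minus_le_four_div_square: fixes y :: real assumes "y > 0" shows "exp (- y) \<le> 4 / y\<^sup>2"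
proof -
  have "1 + y / 2 \<le> exp (y / 2)" by (rule exp_ge_add_one_self)
  then have "y / 2 \<le> exp (y / 2)" by linarith
  then have "(y / 2)\<^sup>2 \<le> (exp (y / 2))\<^sup>2" using assms by (intro power_mono) auto
  also have "(exp (y / 2))\<^sup>2 = exp y" by (simp add: power2_eq_square exp_add[symmetric])
  finally have "y\<^sup>2 / 4 \<le> exp y" by (simp add: power_divide)
  then have "1 / exp y \<le> 1 / (y\<^sup>2 / 4)" using assms by (intro divide_left_mono) auto
  then show ?thesis by (simp add: exp_minus field_simps)
qed

lemma times_sqrt_le_square:
  fixes n :: real assumes "n \<ge> 1" shows "n * sqrt n \<le> n\<^sup>2" "n * sqrt n > 0"
proof -
  have "sqrt n \<le> n"
    using assms by (simp add: real_sqrt_le_iff') (smt (verit) mult_le_cancel_left1 power2_eq_square)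
  then show "n * sqrt n \<le> n\<^sup>2" using assms by (simp add: power2_eq_square)
  show "n * sqrt n > 0" using assms by simp
qed

lemma abs_sum_PiE_ternary_le:
  fixes a :: "'i \<Rightarrow> int"
  assumes x: "x \<in> PiE I (\<lambda>_. {-1,0,1::int})"
  shows "\<bar>\<Sum>j\<in>I. x j * a j\<bar> \<le> (\<Sum>j\<in>I. \<bar>a j\<bar>)"
proof -
  have "\<bar>\<Sum>j\<in>I. x j * a j\<bar> \<le> (\<Sum>j\<in>I. \<bar>x j * a j\<bar>)" by (rule sum_abs)
  also have "\<dots> \<le> (\<Sum>j\<in>I. \<bar>a j\<bar>)"
  proof (rule sum_mono)
    fix j assume "j \<in> I"
    then have "x j \<in> {-1,0,1}" using x by (auto simp: PiE_iff)
    then show "\<bar>x j * a j\<bar> \<le> \<bar>a j\<bar>" by (auto simp: abs_mult)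
  qed
  finally show ?thesis .
qed

lemma exists_separating_prime:
  fixes a :: "'i \<Rightarrow> int" and h m :: int
  assumes fin: "finite I" and inj: "inj_on a I" and h: "h \<in> {1, 2}"
  obtains Q where "prime Q" "Q \<ge> int (card I) ^ 2" "inj_on (\<lambda>j. (h * a j) mod Q) I"
    "\<And>x. x \<in> PiE I (\<lambda>_. {-1, 0, 1}) \<Longrightarrow>
      Q dvd ((\<Sum>j\<in>I. x j * a j) - m) \<longleftrightarrow> (\<Sum>j\<in>I. x j * a j) = m"
proof -
  define A where "A = (\<Sum>j\<in>I. \<bar>a j\<bar>)"
  have A0: "A \<ge> 0" by (simp add: A_def sum_nonneg)
  have a_le: "\<bar>a j\<bar> \<le> A" if "j \<in> I" for j
    using that fin unfolding A_def by (intro member_le_sum) auto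
  obtain q :: nat where q: "prime q" "q > nat (4 * A + 2 * \<bar>m\<bar> + int (card I) ^ 2 + 1)"
    using bigger_prime by blast
  define Q where "Q = int q"
  have Qbig: "Q > 4 * A + 2 * \<bar>m\<bar> + int (card I) ^ 2" using q A0 by (simp add: Q_def)
  have small_dvd: "z = 0" if "Q dvd z" "\<bar>z\<bar> < Q" for z
    using that dvd_imp_le_int[of z Q] by fastforce
  show ?thesis
  proof (rule that)
    show "prime Q" using q by (simp add: Q_def)
    show "Q \<ge> int (card I) ^ 2" using Qbig A0 by simp
    show "inj_on (\<lambda>j. (h * a j) mod Q) I"
    proof (rule inj_onI)
      fix i j assume i: "i \<in> I" and j: "j \<in> I" and "(h * a i) mod Q = (h * a j) mod Q"
      then have "Q dvd (h * a i - h * a j)" by (simp add: mod_eq_dvd_iff)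
      moreover have "\<bar>h * a i - h * a j\<bar> \<le> 2 * (2 * A)"
        unfolding right_diff_distrib[symmetric] abs_mult
        using h a_le[OF i] a_le[OF j] by (intro mult_mono) auto
      moreover have "0 \<le> int (card I) ^ 2 + 2 * \<bar>m\<bar>" by simp
      ultimately have "h * a i - h * a j = 0" using Qbig by (intro small_dvd) linarith+
      then have "h * a i = h * a j" by simp
      then show "i = j" using h inj i j by (auto simp: inj_on_def)
    qed
    fix x assume "x \<in> PiE I (\<lambda>_. {-1, 0, 1::int})"
    then have "\<bar>\<Sum>j\<in>I. x j * a j\<bar> \<le> A" unfolding A_def by (rule abs_sum_PiE_ternary_le)
    moreover have "0 \<le> int (card I) ^ 2" by simp
    ultimately have "\<bar>(\<Sum>j\<in>I. x j * a j) - m\<bar> < Q" using Qbig A0 by linarith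
    then show "Q dvd ((\<Sum>j\<in>I. x j * a j) - m) \<longleftrightarrow> (\<Sum>j\<in>I. x j * a j) = m"
      using small_dvd[of "(\<Sum>j\<in>I. x j * a j) - m"] by auto
  qed
qed

lemma point_prob_le_large:
  fixes p :: "int \<Rightarrow> real" and \<kappa> :: real and h :: int and a :: "'i \<Rightarrow> int"
  assumes char: "\<And>Q z. Q > 0 \<Longrightarrow> norm (char_fun p Q z)
       \<le> exp (- \<kappa> * real_of_int (dist_multiple Q (h * z)) ^ 2 / real_of_int Q ^ 2)"
    and \<kappa>: "\<kappa> > 0" and h: "h \<in> {1, 2}" and nn: "\<And>v. p v \<ge> 0"
    and fin: "finite I" and n5: "card I \<ge> 5" and inj: "inj_on a I"
  shows "point_prob p I a m
    \<le> (32 * sqrt 40 / sqrt \<kappa> + 2 + 6400 / \<kappa>\<^sup>2) / (real (card I) * sqrt (real (card I)))"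
proof -
  define n where "n = real (card I)"
  have n5': "n \<ge> 5" using n5 by (simp add: n_def)
  obtain Q where Q: "prime Q" and Qn: "Q \<ge> int (card I) ^ 2"
    and inj_mod: "inj_on (\<lambda>j. (h * a j) mod Q) I"
    and range: "\<And>x. x \<in> PiE I (\<lambda>_. {-1, 0, 1}) \<Longrightarrow>
      Q dvd ((\<Sum>j\<in>I. x j * a j) - m) \<longleftrightarrow> (\<Sum>j\<in>I. x j * a j) = m"
    using exists_separating_prime[OF fin inj h] by blast
  have Qpos: "Q > 0" using Q prime_gt_0_int by blast
  have "real_of_int Q * point_prob p I a m
      \<le> (\<Sum>r\<in>{0..<Q}. exp (- \<kappa> * (lattice_dist Q (\<lambda>j. h * a j) I r)\<^sup>2 / real_of_int Q ^ 2))"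
    by (rule point_prob_fourier_le[OF Qpos fin nn char[OF Qpos] range])
  also have "\<dots> \<le> real_of_int Q * (32 * sqrt 40 / sqrt \<kappa>) / (n * sqrt n) + 2
      + real_of_int Q * exp (- \<kappa> * n / 40)"
    unfolding n_def by (rule sum_exp_lattice_dist_le[OF Q fin n5 inj_mod \<kappa>])
  finally have "point_prob p I a m
      \<le> (32 * sqrt 40 / sqrt \<kappa>) / (n * sqrt n) + 2 / real_of_int Q + exp (- \<kappa> * n / 40)"
    using Qpos by (simp add: field_simps)
  also have "2 / real_of_int Q \<le> 2 / (n * sqrt n)"
  proof -
    have "real_of_int (int (card I) ^ 2) \<le> real_of_int Q" using Qn by (simp only: of_int_le_iff)
    then have "real_of_int Q \<ge> n\<^sup>2" by (simp add: n_def)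
    then show ?thesis using times_sqrt_le_square[of n] n5' Qpos by (intro divide_left_mono) auto
  qed
  also have "exp (- \<kappa> * n / 40) \<le> 6400 / \<kappa>\<^sup>2 / (n * sqrt n)"
  proof -
    have "exp (- (\<kappa> * n / 40)) \<le> 4 / (\<kappa> * n / 40)\<^sup>2"
      using \<kappa> n5' by (intro exp_minus_le_four_div_square) auto
    also have "\<dots> = 6400 / \<kappa>\<^sup>2 / n\<^sup>2" by (simp add: power_divide power_mult_distrib)
    also have "\<dots> \<le> 6400 / \<kappa>\<^sup>2 / (n * sqrt n)"
      using times_sqrt_le_square[of n] \<kappa> n5' by (intro divide_left_mono) auto
    finally show ?thesis by simp
  qed
  finally show ?thesis by (simp add: n_def add_divide_distrib)
qed

theorem point_prob_bound:
  fixes p :: "int \<Rightarrow> real"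
  assumes nn: "\<And>v. p v \<ge> 0" and sum1: "p (-1) + p 0 + p 1 = 1"
    and lt: "p (-1) < 1" "p 0 < 1" "p 1 < 1"
  obtains C where "C > 0" "\<And>I a m. finite I \<Longrightarrow> card I \<ge> 1 \<Longrightarrow> inj_on a I \<Longrightarrow>
    point_prob p I a m \<le> C / (real (card I) * sqrt (real (card I)))"
proof -
  obtain \<kappa> h where \<kappa>: "\<kappa> > 0" and h: "h \<in> {1, 2}" and char: "\<And>Q z. Q > 0 \<Longrightarrow>
      norm (char_fun p Q z) \<le> exp (- \<kappa> * real_of_int (dist_multiple Q (h * z)) ^ 2 / real_of_int Q ^ 2)"
    using norm_char_fun_le_exp[OF nn sum1 lt] by blast
  define K where "K = 32 * sqrt 40 / sqrt \<kappa> + 2 + 6400 / \<kappa>\<^sup>2"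
  have K0: "K \<ge> 0" using \<kappa> by (simp add: K_def)
  show ?thesis
  proof (rule that[of "8 + K"])
    show "0 < 8 + K" using K0 by simp
    fix I and a :: "'i \<Rightarrow> int" and m :: int
    assume fin: "finite I" and n1: "card I \<ge> 1" and inj: "inj_on a I"
    define n where "n = real (card I)"
    have ns: "n * sqrt n > 0" using n1 by (simp add: n_def)
    show "point_prob p I a m \<le> (8 + K) / (real (card I) * sqrt (real (card I)))"
    proof (cases "card I \<ge> 5")
      case True
      have "point_prob p I a m \<le> K / (n * sqrt n)"
        unfolding K_def n_def by (rule point_prob_le_large[OF char \<kappa> h nn fin True inj])
      also have "\<dots> \<le> (8 + K) / (n * sqrt n)" using ns by (intro divide_right_mono) auto
      finally show ?thesis by (simp add: n_def)
    next
      case False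
      \<comment> \<open>for fewer than five terms the trivial bound 1 suffices, as \<open>n * sqrt n \<le> 8\<close>\<close>
      then have n4: "n \<le> 4" by (simp add: n_def)
      have "sqrt n \<le> sqrt 4" using n4 by (rule real_sqrt_le_mono)
      then have "n * sqrt n \<le> 4 * 2" using n4 ns n1 by (intro mult_mono) (auto simp: n_def)
      then have "1 \<le> (8 + K) / (n * sqrt n)" using ns K0 by (simp add: field_simps)
      then show ?thesis using point_prob_le_1[OF nn sum1 fin, of a m] by (simp add: n_def)
    qed
  qed
qed

lemma (in prob_space) measure_restrict_vars_eq_sum_PiE:
  fixes X :: "'i \<Rightarrow> 'a \<Rightarrow> 'b" and P :: "('i \<Rightarrow> 'b) \<Rightarrow> bool"
  assumes indep: "indep_vars (\<lambda>_. count_space UNIV) X I" and fin: "finite I" "I \<noteq> {}"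
    and vals: "\<And>j \<omega>. j \<in> I \<Longrightarrow> \<omega> \<in> space M \<Longrightarrow> X j \<omega> \<in> V" and finV: "finite V"
  shows "measure M {\<omega> \<in> space M. P (restrict (\<lambda>j. X j \<omega>) I)}
    = (\<Sum>x\<in>{x \<in> PiE I (\<lambda>_. V). P x}. \<Prod>j\<in>I. measure M (X j -` {x j} \<inter> space M))"
proof -
  define E where "E x = (\<Inter>j\<in>I. X j -` {x j} \<inter> space M)" for x
  have E_iff: "\<omega> \<in> E x \<longleftrightarrow> \<omega> \<in> space M \<and> (\<forall>j\<in>I. X j \<omega> = x j)" for \<omega> x
    using fin(2) by (auto simp: E_def)
  have sets_E: "E x \<in> sets M" for x
  proof -
    have "X j \<in> measurable M (count_space UNIV)" if "j \<in> I" for j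
      using indep that by (auto simp: indep_vars_def)
    then show ?thesis
      unfolding E_def using fin by (intro sets.finite_INT) (auto intro: measurable_sets)
  qed
  let ?X = "{x \<in> PiE I (\<lambda>_. V). P x}"
  have "{\<omega> \<in> space M. P (restrict (\<lambda>j. X j \<omega>) I)} = (\<Union>x\<in>?X. E x)"
  proof (intro set_eqI iffI)
    fix \<omega> assume "\<omega> \<in> {\<omega> \<in> space M. P (restrict (\<lambda>j. X j \<omega>) I)}"
    then show "\<omega> \<in> (\<Union>x\<in>?X. E x)"
      using vals by (intro UN_I[of "restrict (\<lambda>j. X j \<omega>) I"]) (auto simp: E_iff)
  next
    fix \<omega> assume "\<omega> \<in> (\<Union>x\<in>?X. E x)"
    then obtain x where x: "x \<in> ?X" "\<omega> \<in> E x" by blast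
    then have "restrict (\<lambda>j. X j \<omega>) I = x"
      by (intro PiE_ext[of _ I "\<lambda>_. V"]) (auto simp: E_iff)
    then show "\<omega> \<in> {\<omega> \<in> space M. P (restrict (\<lambda>j. X j \<omega>) I)}"
      using x by (auto simp: E_iff)
  qed
  also have "measure M (\<Union>x\<in>?X. E x) = (\<Sum>x\<in>?X. measure M (E x))"
  proof (rule measure_finite_Union)
    show "finite ?X" using fin finV by (auto intro: finite_subset[OF _ finite_PiE[of I "\<lambda>_. V"]])
    show "disjoint_family_on E ?X"
      unfolding disjoint_family_on_def
    proof (intro ballI impI)
      fix x y assume "x \<in> ?X" "y \<in> ?X" "x \<noteq> y"
      then obtain j where "j \<in> I" "x j \<noteq> y j" by (metis (mono_tags, lifting) PiE_ext mem_Collect_eq)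
      then show "E x \<inter> E y = {}" by (auto simp: E_iff)
    qed
  qed (auto simp: sets_E emeasure_finite)
  also have "\<dots> = (\<Sum>x\<in>?X. \<Prod>j\<in>I. measure M (X j -` {x j} \<inter> space M))"
    unfolding E_def using indep fin by (intro sum.cong refl indep_varsD) auto
  finally show ?thesis .
qed

lemma (in prob_space) sum_measure_eq_1:
  assumes "finite V" and X: "X \<in> measurable M (count_space UNIV)"
    and vals: "\<And>\<omega>. \<omega> \<in> space M \<Longrightarrow> X \<omega> \<in> V"
  shows "(\<Sum>v\<in>V. measure M {\<omega> \<in> space M. X \<omega> = v}) = 1"
proof -
  have eq: "{\<omega> \<in> space M. X \<omega> = v} = X -` {v} \<inter> space M" for v by auto
  have "(\<Sum>v\<in>V. measure M {\<omega> \<in> space M. X \<omega> = v}) = measure M (\<Union>v\<in>V. X -` {v} \<inter> space M)"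
    unfolding eq
    using assms(1) measurable_sets[OF X]
    by (intro measure_finite_Union[symmetric]) (auto simp: disjoint_family_on_def emeasure_finite)
  also have "(\<Union>v\<in>V. X -` {v} \<inter> space M) = space M" using vals by auto
  finally show ?thesis by (simp add: prob_space)
qed

lemma measure_eq_if_distr_eq:
  assumes "X \<in> measurable M (count_space UNIV)" "Y \<in> measurable M (count_space UNIV)"
    and "distr M (count_space UNIV) X = distr M (count_space UNIV) Y"
  shows "measure M {\<omega> \<in> space M. X \<omega> = v} = measure M {\<omega> \<in> space M. Y \<omega> = v}"
proof -
  have "{\<omega> \<in> space M. Z \<omega> = v} = Z -` {v} \<inter> space M" for Z :: "'a \<Rightarrow> 'b" by auto
  then show ?thesis
    using measure_distr[OF assms(1), of "{v}"] measure_distr[OF assms(2), of "{v}"] assms(3) by simp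
qed

lemma powr_three_halves: "x \<ge> 0 \<Longrightarrow> x powr (3/2) = x * sqrt x" for x :: real
proof -
  assume x: "x \<ge> 0"
  have "x powr (3/2) = x powr (1 + 1/2)" by simp
  also have "\<dots> = x powr 1 * x powr (1/2)" by (rule powr_add)
  also have "\<dots> = x * sqrt x" using x by (simp add: powr_half_sqrt)
  finally show ?thesis .
qed

lemma (in prob_space) measure_sum_eq_point_prob:
  fixes \<xi> :: "'i \<Rightarrow> 'a \<Rightarrow> int"
  assumes indep: "indep_vars (\<lambda>_. count_space UNIV) \<xi> I" and fin: "finite I" "I \<noteq> {}"
    and vals: "\<And>j \<omega>. j \<in> I \<Longrightarrow> \<omega> \<in> space M \<Longrightarrow> \<xi> j \<omega> \<in> {-1, 0, 1}"
    and pmf: "\<And>j v. j \<in> I \<Longrightarrow> measure M {\<omega> \<in> space M. \<xi> j \<omega> = v} = p v"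
  shows "measure M {\<omega> \<in> space M. (\<Sum>j\<in>I. \<xi> j \<omega> * a j) = m} = point_prob p I a m"
proof -
  have finite_ternary: "finite {-1, 0, 1::int}" by simp
  have "{\<omega> \<in> space M. (\<Sum>j\<in>I. \<xi> j \<omega> * a j) = m}
      = {\<omega> \<in> space M. (\<Sum>j\<in>I. restrict (\<lambda>j. \<xi> j \<omega>) I j * a j) = m}"
    by (simp cong: sum.cong)
  also have "measure M \<dots> = (\<Sum>x\<in>{x \<in> PiE I (\<lambda>_. {-1, 0, 1}). (\<Sum>j\<in>I. x j * a j) = m}.
      \<Prod>j\<in>I. measure M (\<xi> j -` {x j} \<inter> space M))"
    by (rule measure_restrict_vars_eq_sum_PiE[OF indep fin vals finite_ternary])
  also have "\<dots> = point_prob p I a m"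
    unfolding point_prob_def by (intro sum.cong refl prod.cong) (auto simp: pmf[symmetric] vimage_def Int_def conj_commute)
  finally show ?thesis .
qed

theorem corollary3p2:
  fixes M :: "'a measure" and \<xi> :: "nat \<Rightarrow> 'a \<Rightarrow> int"
  assumes "prob_space M"
    and indep: "prob_space.indep_vars M (\<lambda>_. count_space UNIV) \<xi> {1..}"
    and ident: "\<And>j. j \<ge> 1 \<Longrightarrow>
        distr M (count_space UNIV) (\<xi> j) = distr M (count_space UNIV) (\<xi> 1)"
    and vals: "\<And>j \<omega>. j \<ge> 1 \<Longrightarrow> \<omega> \<in> space M \<Longrightarrow> \<xi> j \<omega> \<in> {-1, 0, 1}"
    and small: "\<And>x. x \<in> {-1, 0, 1::int} \<Longrightarrow>
        measure M {\<omega> \<in> space M. \<xi> 1 \<omega> = x} < 1 / sqrt 3"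
  shows "\<exists>C>0. \<forall>N::nat. N \<ge> 1 \<longrightarrow> (\<forall>a :: nat \<Rightarrow> int. inj_on a {1..N} \<longrightarrow>
           (\<forall>m::int. measure M {\<omega> \<in> space M. (\<Sum>j=1..N. \<xi> j \<omega> * a j) = m}
                       \<le> C / (real N) powr (3/2)))"
proof -
  \<comment> \<open>of the hypothesis \<open>small\<close> only the non-degeneracy \<open>P(\<xi>\<^sub>1 = x) < 1\<close> is used\<close>
  interpret prob_space M by fact
  have meas: "\<xi> j \<in> measurable M (count_space UNIV)" if "j \<ge> 1" for j
    using indep that by (auto simp: indep_vars_def)
  define p where "p v = measure M {\<omega> \<in> space M. \<xi> 1 \<omega> = v}" for v
  have pmf: "measure M {\<omega> \<in> space M. \<xi> j \<omega> = v} = p v" if "j \<ge> 1" for j v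
    unfolding p_def using meas[OF that] meas ident[OF that] by (intro measure_eq_if_distr_eq) auto
  have "p v \<ge> 0" for v by (simp add: p_def)
  moreover have "p (-1) + p 0 + p 1 = 1"
    using sum_measure_eq_1[of "{-1, 0, 1}" "\<xi> 1"] meas vals by (simp add: p_def add.assoc)
  moreover have "p (-1) < 1" "p 0 < 1" "p 1 < 1"
    using small less_le_trans[of _ "1 / sqrt 3" 1] by (auto simp: p_def)
  ultimately obtain C where "C > 0" and C: "\<And>(I :: nat set) a m. finite I \<Longrightarrow> card I \<ge> 1 \<Longrightarrow>
      inj_on a I \<Longrightarrow> point_prob p I a m \<le> C / (real (card I) * sqrt (real (card I)))"
    using point_prob_bound by metis
  show ?thesis
  proof (intro exI[of _ C] conjI allI impI)
    fix N :: nat and a :: "nat \<Rightarrow> int" and m :: int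
    assume N: "N \<ge> 1" and inj: "inj_on a {1..N}"
    have "measure M {\<omega> \<in> space M. (\<Sum>j=1..N. \<xi> j \<omega> * a j) = m} = point_prob p {1..N} a m"
      using N by (intro measure_sum_eq_point_prob[OF indep_vars_subset[OF indep]] vals pmf) auto
    also have "\<dots> \<le> C / (real N * sqrt (real N))" using C[of "{1..N}" a m] N inj by simp
    finally show "measure M {\<omega> \<in> space M. (\<Sum>j=1..N. \<xi> j \<omega> * a j) = m} \<le> C / real N powr (3/2)"
      by (simp add: powr_three_halves)
  qed (rule \<open>C > 0\<close>)
qed

end
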